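(* The functor $\mathcal{M}\colon\mathbb{O}\to\mathbf{Set}$ preserves pullbacks.
   Context: Fix a set $Act$ of action labels, an infinite set $\mathcal{E}$ of event names and a set $S$ of places. An $Act$-labelled poset is $O=(X_O,\preccurlyeq_O,l_O)$, $X_O\subseteq\mathcal{E}$, with partial order $\preccurlyeq_O$ and $l_O\colon X_O\to Act$; $|O|=\{(x,l_O(x))\}$. Morphisms preserve order and labels (acting on labelled events by $\sigma(x_a)=\sigma(x)_a$); order-embeddings additionally reflect order. $\mathbb{O}$ is the category whose objects are chosen representatives of the isomorphism classes of finite $Act$-labelled posets (abstract posets) and whose morphisms are order-embeddings. For $K\subseteq|O|$, $K$ is down-closed if $y\in K$, $x\preccurlyeq_O y$ imply $x\in K$, and $\downarrow_O K=\{y\in|O|:\exists x\in K,\ y\preccurlyeq_O x\}$. A causal marking is a finite set $c$ of pairs $K\vdash s$ with $s\in S$ and $K$ a finite subset of $\mathcal{E}\times Act$; $c\sigma=\{\sigma(K)\vdash s\}$ and $\downarrow_O c=\{\downarrow_O K\vdash s: K\vdash s\in c\}$. $O\rhd c$ is a P-marking if every cause set of $c$ is a down-closed subset of $|O|$. The presheaf of P-markings $\mathcal{M}\colon\mathbb{O}\to\mathbf{Set}$ is $\mathcal{M}(O)=\{c: O\rhd c\text{ is a P-marking}\}$ and, for $\sigma\colon O\to O'$, $\mathcal{M}(\sigma)(c)=\downarrow_{O'}(c\sigma)$. *)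

theory Defs
  imports Main
begin

(* An Act-labelled poset T = (X_O, order, labelling); event names of type 'e, actions 'a.
   The order is a relation on X_O; the labelling is made extensional (undefined outside X_O)
   so that equal posets are equal as HOL values. *)
type_synonym ('e,'a) lposet = "'e set \<times> ('e \<times> 'e) set \<times> ('e \<Rightarrow> 'a)"

definition evs :: "('e,'a) lposet \<Rightarrow> 'e set" where "evs T = fst T"
definition ord :: "('e,'a) lposet \<Rightarrow> ('e \<times> 'e) set" where "ord T = fst (snd T)"
definition lab :: "('e,'a) lposet \<Rightarrow> 'e \<Rightarrow> 'a" where "lab T = snd (snd T)"

definition wf_lposet :: "('e,'a) lposet \<Rightarrow> bool" where
  "wf_lposet T \<longleftrightarrow>
     ord T \<subseteq> evs T \<times> evs T \<and>
     (\<forall>x\<in>evs T. (x,x) \<in> ord T) \<and>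
     (\<forall>x y z. (x,y) \<in> ord T \<longrightarrow> (y,z) \<in> ord T \<longrightarrow> (x,z) \<in> ord T) \<and>
     (\<forall>x y. (x,y) \<in> ord T \<longrightarrow> (y,x) \<in> ord T \<longrightarrow> x = y) \<and>
     (\<forall>x. x \<notin> evs T \<longrightarrow> lab T x = undefined)"

definition finite_lposet :: "('e,'a) lposet \<Rightarrow> bool" where
  "finite_lposet T \<longleftrightarrow> wf_lposet T \<and> finite (evs T)"

definition levs :: "('e,'a) lposet \<Rightarrow> ('e \<times> 'a) set" where
  "levs T = {(x, lab T x) | x. x \<in> evs T}"

definition oemb :: "('e,'a) lposet \<Rightarrow> ('e,'a) lposet \<Rightarrow> ('e \<Rightarrow> 'e) \<Rightarrow> bool" where
  "oemb T T' \<sigma> \<longleftrightarrow>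
     (\<forall>x\<in>evs T. \<sigma> x \<in> evs T') \<and>
     (\<forall>x\<in>evs T. lab T' (\<sigma> x) = lab T x) \<and>
     (\<forall>x\<in>evs T. \<forall>y\<in>evs T. (x,y) \<in> ord T \<longleftrightarrow> (\<sigma> x, \<sigma> y) \<in> ord T')"

(* equality of morphisms out of T (they are functions on X_O) *)
definition meq :: "('e,'a) lposet \<Rightarrow> ('e \<Rightarrow> 'e) \<Rightarrow> ('e \<Rightarrow> 'e) \<Rightarrow> bool" where
  "meq T f g \<longleftrightarrow> (\<forall>x\<in>evs T. f x = g x)"

definition lposet_iso :: "('e,'a) lposet \<Rightarrow> ('e,'a) lposet \<Rightarrow> bool" where
  "lposet_iso T T' \<longleftrightarrow> (\<exists>\<sigma> \<tau>. oemb T T' \<sigma> \<and> oemb T' T \<tau> \<and>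
       meq T (\<tau> \<circ> \<sigma>) id \<and> meq T' (\<sigma> \<circ> \<tau>) id)"

(* Reps is a choice of representatives of the isomorphism classes of finite labelled posets:
   the objects of the category \<T>. *)
definition is_rep_choice :: "('e,'a) lposet set \<Rightarrow> bool" where
  "is_rep_choice Reps \<longleftrightarrow>
     (\<forall>T\<in>Reps. finite_lposet T) \<and>
     (\<forall>T. finite_lposet T \<longrightarrow> (\<exists>!R. R \<in> Reps \<and> lposet_iso T R))"

definition is_pullback_O ::
  "('e,'a) lposet set \<Rightarrow> ('e,'a) lposet \<Rightarrow> ('e,'a) lposet \<Rightarrow> ('e,'a) lposet \<Rightarrow> ('e,'a) lposet \<Rightarrow>
   ('e \<Rightarrow> 'e) \<Rightarrow> ('e \<Rightarrow> 'e) \<Rightarrow> ('e \<Rightarrow> 'e) \<Rightarrow> ('e \<Rightarrow> 'e) \<Rightarrow> bool" where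
  "is_pullback_O Reps P B C D p1 p2 h k \<longleftrightarrow>
     P \<in> Reps \<and> B \<in> Reps \<and> C \<in> Reps \<and> D \<in> Reps \<and>
     oemb P B p1 \<and> oemb P C p2 \<and> oemb B D h \<and> oemb C D k \<and>
     meq P (h \<circ> p1) (k \<circ> p2) \<and>
     (\<forall>Q\<in>Reps. \<forall>q1 q2. oemb Q B q1 \<and> oemb Q C q2 \<and> meq Q (h \<circ> q1) (k \<circ> q2) \<longrightarrow>
        (\<exists>u. oemb Q P u \<and> meq Q (p1 \<circ> u) q1 \<and> meq Q (p2 \<circ> u) q2 \<and>
             (\<forall>v. oemb Q P v \<and> meq Q (p1 \<circ> v) q1 \<and> meq Q (p2 \<circ> v) q2 \<longrightarrow> meq Q u v)))"

(* Causal markings: finite sets of pairs K \<turnstile> s *)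
type_synonym ('e,'a,'s) cmarking = "(('e \<times> 'a) set \<times> 's) set"

definition down_closed :: "('e,'a) lposet \<Rightarrow> ('e \<times> 'a) set \<Rightarrow> bool" where
  "down_closed T K \<longleftrightarrow> (\<forall>y\<in>K. \<forall>x\<in>levs T. (fst x, fst y) \<in> ord T \<longrightarrow> x \<in> K)"

definition down :: "('e,'a) lposet \<Rightarrow> ('e \<times> 'a) set \<Rightarrow> ('e \<times> 'a) set" where
  "down T K = {y \<in> levs T. \<exists>x\<in>K. (fst y, fst x) \<in> ord T}"

definition down_m :: "('e,'a) lposet \<Rightarrow> ('e,'a,'s) cmarking \<Rightarrow> ('e,'a,'s) cmarking" where
  "down_m T c = {(down T K, s) | K s. (K, s) \<in> c}"

definition lmap :: "('e \<Rightarrow> 'e) \<Rightarrow> 'e \<times> 'a \<Rightarrow> 'e \<times> 'a" where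
  "lmap \<sigma> xa = (\<sigma> (fst xa), snd xa)"

definition cren :: "('e \<Rightarrow> 'e) \<Rightarrow> ('e,'a,'s) cmarking \<Rightarrow> ('e,'a,'s) cmarking" where
  "cren \<sigma> c = {(lmap \<sigma> ` K, s) | K s. (K, s) \<in> c}"

definition Mobj :: "('e,'a) lposet \<Rightarrow> ('e,'a,'s) cmarking set" where
  "Mobj T = {c. finite c \<and> (\<forall>(K,s)\<in>c. finite K \<and> K \<subseteq> levs T \<and> down_closed T K)}"

definition Mmor :: "('e,'a) lposet \<Rightarrow> ('e \<Rightarrow> 'e) \<Rightarrow> ('e,'a,'s) cmarking \<Rightarrow> ('e,'a,'s) cmarking" where
  "Mmor T' \<sigma> c = down_m T' (cren \<sigma> c)"

(* A commuting square of sets/functions  SP --f1--> SB --g1--> SD,  SP --f2--> SC --g2--> SD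
   is a pullback in Set iff  x \<mapsto> (f1 x, f2 x)  is a bijection onto the canonical pullback. *)
definition is_pullback_Set ::
  "'x set \<Rightarrow> 'x set \<Rightarrow> 'x set \<Rightarrow> 'x set \<Rightarrow> ('x \<Rightarrow> 'x) \<Rightarrow> ('x \<Rightarrow> 'x) \<Rightarrow> ('x \<Rightarrow> 'x) \<Rightarrow> ('x \<Rightarrow> 'x) \<Rightarrow> bool" where
  "is_pullback_Set SP SB SC SD f1 f2 g1 g2 \<longleftrightarrow>
     (\<forall>x\<in>SP. f1 x \<in> SB \<and> f2 x \<in> SC) \<and> (\<forall>x\<in>SB. g1 x \<in> SD) \<and> (\<forall>x\<in>SC. g2 x \<in> SD) \<and>
     (\<forall>x\<in>SP. g1 (f1 x) = g2 (f2 x)) \<and>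
     bij_betw (\<lambda>x. (f1 x, f2 x)) SP {(b, c). b \<in> SB \<and> c \<in> SC \<and> g1 b = g2 c}"

end

theory Submission
  imports Defs
begin

text \<open>
  \<open>\<M>(\<sigma>)\<close> sends a cause set \<open>K\<close> to the down-closure of its image. As order-embeddings
  reflect the order, a down-closed \<open>K\<close> is recovered from that down-closure, so \<open>\<M>(p\<^sub>1)\<close> is
  injective and so is the comparison map into the pullback of sets. Conversely, let \<open>b\<close>, \<open>c\<close>
  be P-markings of \<open>B\<close>, \<open>C\<close> with the same image in \<open>D\<close>. Pair each \<open>K \<turnstile> s\<close> of \<open>b\<close> with an
  \<open>L \<turnstile> s\<close> of \<open>c\<close> having the same image, and take as cause set in \<open>P\<close> the events sent into
  \<open>K\<close> by \<open>p\<^sub>1\<close> and into \<open>L\<close> by \<open>p\<^sub>2\<close>. It generates \<open>K\<close>: every element of \<open>K\<close> lies below a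
  maximal one, whose image under \<open>h\<close> is the image under \<open>k\<close> of an element of \<open>L\<close>, and the
  universal property applied to the one-point poset lifts this pair of events to an event
  of \<open>P\<close>. Symmetrically it generates \<open>L\<close>.
\<close>

section \<open>Labelled posets and down-closures\<close>

lemma lposet_refl: "wf_lposet T \<Longrightarrow> x \<in> evs T \<Longrightarrow> (x, x) \<in> ord T"
  by (simp add: wf_lposet_def)

lemma lposet_trans: "wf_lposet T \<Longrightarrow> (x, y) \<in> ord T \<Longrightarrow> (y, z) \<in> ord T \<Longrightarrow> (x, z) \<in> ord T"
  unfolding wf_lposet_def by blast

lemma lposet_antisym: "wf_lposet T \<Longrightarrow> (x, y) \<in> ord T \<Longrightarrow> (y, x) \<in> ord T \<Longrightarrow> x = y"
  unfolding wf_lposet_def by blast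

lemma lposet_maximal_above:
  assumes T: "wf_lposet T" and "finite A" "A \<subseteq> evs T" "a \<in> A"
  obtains m where "m \<in> A" "(a, m) \<in> ord T" "\<forall>b\<in>A. (m, b) \<in> ord T \<longrightarrow> b = m"
proof -
  define less where "less x y \<longleftrightarrow> (x, y) \<in> ord T \<and> x \<noteq> y" for x y
  have "asymp_on A less"
    unfolding less_def by (rule asymp_onI) (use lposet_antisym[OF T] in blast)
  moreover have "transp_on A less"
    unfolding less_def by (rule transp_onI) (use lposet_trans[OF T] lposet_antisym[OF T] in blast)
  moreover have "\<exists>x\<in>A. (a, x) \<in> ord T"
    using assms(3,4) lposet_refl[OF T] by blast
  ultimately obtain m where m: "m \<in> A" "(a, m) \<in> ord T"
    and max: "\<forall>b\<in>A. less m b \<longrightarrow> (a, b) \<notin> ord T"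
    using Finite_Set.bex_max_element_with_property[OF \<open>finite A\<close>, of less "\<lambda>x. (a, x) \<in> ord T"]
    by blast
  have "b = m" if "b \<in> A" "(m, b) \<in> ord T" for b
    using max that(1) lposet_trans[OF T m(2) that(2)] that(2) unfolding less_def by blast
  with m that show thesis by blast
qed

lemma mem_levs_iff: "z \<in> levs T \<longleftrightarrow> fst z \<in> evs T \<and> snd z = lab T (fst z)"
  unfolding levs_def by (cases z) auto

lemma fst_lmap [simp]: "fst (lmap \<sigma> z) = \<sigma> (fst z)"
  by (simp add: lmap_def)

lemma oemb_evs: "oemb T T' \<sigma> \<Longrightarrow> x \<in> evs T \<Longrightarrow> \<sigma> x \<in> evs T'"
  unfolding oemb_def by simp

lemma oemb_lab: "oemb T T' \<sigma> \<Longrightarrow> x \<in> evs T \<Longrightarrow> lab T' (\<sigma> x) = lab T x"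
  unfolding oemb_def by simp

lemma oemb_ord_iff:
  "oemb T T' \<sigma> \<Longrightarrow> x \<in> evs T \<Longrightarrow> y \<in> evs T \<Longrightarrow> (\<sigma> x, \<sigma> y) \<in> ord T' \<longleftrightarrow> (x, y) \<in> ord T"
  unfolding oemb_def by simp

lemma lmap_levs: "oemb T T' \<sigma> \<Longrightarrow> z \<in> levs T \<Longrightarrow> lmap \<sigma> z \<in> levs T'"
  by (simp add: mem_levs_iff lmap_def oemb_evs oemb_lab)

lemma lmap_eq_levs:
  assumes "oemb T T' \<sigma>" "u \<in> evs T" "x \<in> levs T'" "\<sigma> u = fst x"
  shows "lmap \<sigma> (u, lab T u) = x"
  using assms oemb_lab[OF assms(1,2)] by (cases x) (simp add: lmap_def mem_levs_iff)

lemma mem_down_iff: "y \<in> down T X \<longleftrightarrow> y \<in> levs T \<and> (\<exists>x\<in>X. (fst y, fst x) \<in> ord T)"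
  unfolding down_def by blast

lemma down_subset_levs: "down T X \<subseteq> levs T"
  by (auto simp: mem_down_iff)

lemma down_closed_down: "wf_lposet T \<Longrightarrow> down_closed T (down T X)"
  unfolding down_closed_def down_def by (blast intro: lposet_trans)

lemma down_subset_down_closed: "down_closed T K \<Longrightarrow> X \<subseteq> K \<Longrightarrow> down T X \<subseteq> K"
  unfolding down_closed_def down_def by blast

lemma lmap_mem_down_lmap:
  assumes "wf_lposet T'" "oemb T T' \<sigma>" "x \<in> K" "K \<subseteq> levs T"
  shows "lmap \<sigma> x \<in> down T' (lmap \<sigma> ` K)"
proof -
  have "lmap \<sigma> x \<in> levs T'"
    using lmap_levs[OF assms(2)] assms(3,4) by blast
  with assms(1,3) show ?thesis
    by (auto simp: mem_down_iff mem_levs_iff intro: lposet_refl)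
qed

lemma down_closed_lmap_preimage:
  assumes "oemb T T' \<sigma>" "down_closed T' K"
  shows "down_closed T {z \<in> levs T. lmap \<sigma> z \<in> K}"
  unfolding down_closed_def
proof (intro ballI impI)
  fix y x assume y: "y \<in> {z \<in> levs T. lmap \<sigma> z \<in> K}" and x: "x \<in> levs T"
    and xy: "(fst x, fst y) \<in> ord T"
  have "(fst (lmap \<sigma> x), fst (lmap \<sigma> y)) \<in> ord T'"
    using xy x y oemb_ord_iff[OF assms(1)] by (simp add: mem_levs_iff)
  then have "lmap \<sigma> x \<in> K"
    using assms(2) y lmap_levs[OF assms(1) x] unfolding down_closed_def by blast
  with x show "x \<in> {z \<in> levs T. lmap \<sigma> z \<in> K}" by simp
qed

lemma down_closed_Int: "down_closed T K \<Longrightarrow> down_closed T L \<Longrightarrow> down_closed T (K \<inter> L)"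
  unfolding down_closed_def by blast

lemma down_lmap_comp:
  assumes T': "wf_lposet T'" and T'': "wf_lposet T''" and \<sigma>: "oemb T T' \<sigma>" and \<tau>: "oemb T' T'' \<tau>"
    and X: "X \<subseteq> levs T"
  shows "down T'' (lmap \<tau> ` down T' (lmap \<sigma> ` X)) = down T'' (lmap (\<tau> \<circ> \<sigma>) ` X)"
proof (intro equalityI subsetI)
  fix y assume "y \<in> down T'' (lmap \<tau> ` down T' (lmap \<sigma> ` X))"
  then obtain w x where y: "y \<in> levs T''" and "(fst y, \<tau> (fst w)) \<in> ord T''"
    and w: "w \<in> levs T'" "(fst w, \<sigma> (fst x)) \<in> ord T'" and x: "x \<in> X"
    by (auto simp: mem_down_iff)
  moreover have "(\<tau> (fst w), \<tau> (\<sigma> (fst x))) \<in> ord T''"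
    using w x X oemb_ord_iff[OF \<tau>] oemb_evs[OF \<sigma>] by (auto simp: mem_levs_iff)
  ultimately show "y \<in> down T'' (lmap (\<tau> \<circ> \<sigma>) ` X)"
    by (auto simp: mem_down_iff intro: lposet_trans[OF T''])
next
  fix y assume "y \<in> down T'' (lmap (\<tau> \<circ> \<sigma>) ` X)"
  then obtain x where y: "y \<in> levs T''" and x: "x \<in> X"
    and "(fst y, fst (lmap \<tau> (lmap \<sigma> x))) \<in> ord T''"
    by (auto simp: mem_down_iff)
  moreover have "lmap \<tau> (lmap \<sigma> x) \<in> lmap \<tau> ` down T' (lmap \<sigma> ` X)"
    using lmap_mem_down_lmap[OF T' \<sigma> x X] by blast
  ultimately show "y \<in> down T'' (lmap \<tau> ` down T' (lmap \<sigma> ` X))"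
    unfolding mem_down_iff by blast
qed

lemma lmap_mem_down_lmap_iff:
  assumes T': "wf_lposet T'" and \<sigma>: "oemb T T' \<sigma>" and z: "z \<in> levs T"
    and K: "K \<subseteq> levs T" "down_closed T K"
  shows "lmap \<sigma> z \<in> down T' (lmap \<sigma> ` K) \<longleftrightarrow> z \<in> K"
proof
  assume "lmap \<sigma> z \<in> down T' (lmap \<sigma> ` K)"
  then obtain x where x: "x \<in> K" and "(\<sigma> (fst z), \<sigma> (fst x)) \<in> ord T'"
    by (auto simp: mem_down_iff)
  then have "(fst z, fst x) \<in> ord T"
    using oemb_ord_iff[OF \<sigma>] z K(1) by (auto simp: mem_levs_iff)
  with x z K(2) show "z \<in> K"
    unfolding down_closed_def by blast
qed (use lmap_mem_down_lmap[OF T' \<sigma> _ K(1)] in blast)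

lemma inj_on_down_lmap:
  assumes "wf_lposet T'" "oemb T T' \<sigma>"
  shows "inj_on (\<lambda>K. down T' (lmap \<sigma> ` K)) {K. K \<subseteq> levs T \<and> down_closed T K}"
proof (rule inj_onI)
  fix K L assume K: "K \<in> {K. K \<subseteq> levs T \<and> down_closed T K}" and L: "L \<in> {K. K \<subseteq> levs T \<and> down_closed T K}"
    and eq: "down T' (lmap \<sigma> ` K) = down T' (lmap \<sigma> ` L)"
  have "z \<in> K \<longleftrightarrow> z \<in> L" if "z \<in> levs T" for z
    using lmap_mem_down_lmap_iff[OF assms that, of K] lmap_mem_down_lmap_iff[OF assms that, of L] K L eq
    by simp
  with K L show "K = L" by blast
qed

section \<open>The presheaf of P-markings\<close>

lemma Mmor_eq_image: "Mmor T' \<sigma> c = map_prod (\<lambda>K. down T' (lmap \<sigma> ` K)) id ` c"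
  unfolding Mmor_def down_m_def cren_def by force

lemma Mobj_memD:
  assumes "c \<in> Mobj T" "(K, s) \<in> c"
  shows "finite K" "K \<subseteq> levs T" "down_closed T K"
  using assms unfolding Mobj_def by auto

lemma Mobj_finite: "c \<in> Mobj T \<Longrightarrow> finite c"
  unfolding Mobj_def by simp

lemma Mmor_in_Mobj:
  assumes "finite_lposet T'" "finite c"
  shows "Mmor T' \<sigma> c \<in> Mobj T'"
proof -
  have T': "wf_lposet T'" "finite (levs T')"
    using assms(1) unfolding finite_lposet_def levs_def by simp_all
  have "finite K \<and> K \<subseteq> levs T' \<and> down_closed T' K" if "(K, s) \<in> Mmor T' \<sigma> c" for K s
  proof -
    from that obtain X where "K = down T' (lmap \<sigma> ` X)"
      unfolding Mmor_eq_image by auto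
    then show ?thesis
      using T' down_subset_levs down_closed_down finite_subset by metis
  qed
  moreover have "finite (Mmor T' \<sigma> c)"
    using assms(2) unfolding Mmor_eq_image by simp
  ultimately show ?thesis
    unfolding Mobj_def by auto
qed

lemma Mmor_comp:
  assumes "wf_lposet T'" "wf_lposet T''" "oemb T T' \<sigma>" "oemb T' T'' \<tau>" "c \<in> Mobj T"
  shows "Mmor T'' \<tau> (Mmor T' \<sigma> c) = Mmor T'' (\<tau> \<circ> \<sigma>) c"
  unfolding Mmor_eq_image image_image
  using down_lmap_comp[OF assms(1-4)] Mobj_memD(2)[OF assms(5)] by (intro image_cong) auto

lemma Mmor_cong:
  assumes "meq T f g" "c \<in> Mobj T"
  shows "Mmor T' f c = Mmor T' g c"
proof -
  have "lmap f ` K = lmap g ` K" if "(K, s) \<in> c" for K s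
  proof (rule image_cong[OF refl])
    fix x assume "x \<in> K"
    then have "fst x \<in> evs T"
      using Mobj_memD(2)[OF assms(2) that] by (auto simp: mem_levs_iff)
    with assms(1) show "lmap f x = lmap g x"
      by (simp add: meq_def lmap_def)
  qed
  then show ?thesis
    unfolding Mmor_eq_image by (intro image_cong) auto
qed

lemma inj_on_Mmor:
  assumes "wf_lposet T'" "oemb T T' \<sigma>"
  shows "inj_on (Mmor T' \<sigma>) (Mobj T)"
proof -
  let ?S = "{K. K \<subseteq> levs T \<and> down_closed T K} \<times> UNIV"
  have inj: "inj_on (map_prod (\<lambda>K. down T' (lmap \<sigma> ` K)) id) ?S"
    using inj_on_down_lmap[OF assms] by (simp add: map_prod_inj_on)
  have sub: "c \<subseteq> ?S" if "c \<in> Mobj T" for c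
    using Mobj_memD(2,3)[OF that] by force
  show ?thesis
    unfolding Mmor_eq_image by (rule inj_onI) (use inj_on_image_eq_iff[OF inj sub sub] in blast)
qed

lemma Mmor_eq_Mmor_match:
  assumes "Mmor T \<sigma> b = Mmor T \<tau> c" "(K, s) \<in> b"
  obtains L where "(L, s) \<in> c" "down T (lmap \<sigma> ` K) = down T (lmap \<tau> ` L)"
proof -
  have "(down T (lmap \<sigma> ` K), s) \<in> Mmor T \<sigma> b"
    using assms(2) unfolding Mmor_eq_image by (rule rev_image_eqI) simp
  then have "(down T (lmap \<sigma> ` K), s) \<in> map_prod (\<lambda>L. down T (lmap \<tau> ` L)) id ` c"
    using assms(1) unfolding Mmor_eq_image by simp
  then obtain p where "(down T (lmap \<sigma> ` K), s) = map_prod (\<lambda>L. down T (lmap \<tau> ` L)) id p" "p \<in> c"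
    by (rule imageE)
  with that show thesis
    by (cases p) simp
qed

section \<open>Pullbacks of finite labelled posets\<close>

lemma is_pullback_OD:
  assumes "is_pullback_O Reps P B C D p1 p2 h k"
  shows "P \<in> Reps" "B \<in> Reps" "C \<in> Reps" "D \<in> Reps"
    "oemb P B p1" "oemb P C p2" "oemb B D h" "oemb C D k" "meq P (h \<circ> p1) (k \<circ> p2)"
  using assms unfolding is_pullback_O_def by simp_all

lemma is_pullback_O_universal:
  assumes "is_pullback_O Reps P B C D p1 p2 h k" "Q \<in> Reps"
    "oemb Q B q1" "oemb Q C q2" "meq Q (h \<circ> q1) (k \<circ> q2)"
  shows "\<exists>u. oemb Q P u \<and> meq Q (p1 \<circ> u) q1 \<and> meq Q (p2 \<circ> u) q2 \<and>
    (\<forall>v. oemb Q P v \<and> meq Q (p1 \<circ> v) q1 \<and> meq Q (p2 \<circ> v) q2 \<longrightarrow> meq Q u v)"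
proof -
  have "\<forall>Q\<in>Reps. \<forall>q1 q2. oemb Q B q1 \<and> oemb Q C q2 \<and> meq Q (h \<circ> q1) (k \<circ> q2) \<longrightarrow>
      (\<exists>u. oemb Q P u \<and> meq Q (p1 \<circ> u) q1 \<and> meq Q (p2 \<circ> u) q2 \<and>
        (\<forall>v. oemb Q P v \<and> meq Q (p1 \<circ> v) q1 \<and> meq Q (p2 \<circ> v) q2 \<longrightarrow> meq Q u v))"
    using assms(1) unfolding is_pullback_O_def by blast
  with assms(2-5) show ?thesis by blast
qed

lemma meq_sym: "meq T f g \<longleftrightarrow> meq T g f"
  unfolding meq_def by auto

lemma is_pullback_O_swap:
  assumes PB: "is_pullback_O Reps P B C D p1 p2 h k"
  shows "is_pullback_O Reps P C B D p2 p1 k h"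
  unfolding is_pullback_O_def
proof (intro conjI ballI allI impI)
  fix Q q1 q2 assume "Q \<in> Reps" and "oemb Q C q1 \<and> oemb Q B q2 \<and> meq Q (k \<circ> q1) (h \<circ> q2)"
  with is_pullback_O_universal[OF PB, of Q q2 q1] meq_sym
  show "\<exists>u. oemb Q P u \<and> meq Q (p2 \<circ> u) q1 \<and> meq Q (p1 \<circ> u) q2 \<and>
      (\<forall>v. oemb Q P v \<and> meq Q (p2 \<circ> v) q1 \<and> meq Q (p1 \<circ> v) q2 \<longrightarrow> meq Q u v)"
    by blast
qed (use is_pullback_OD[OF PB] meq_sym in blast)+

lemma rep_choice_finite_lposet: "is_rep_choice Reps \<Longrightarrow> T \<in> Reps \<Longrightarrow> finite_lposet T"
  unfolding is_rep_choice_def by simp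

lemma rep_choice_singleton:
  fixes Reps :: "('e, 'a) lposet set"
  assumes "is_rep_choice Reps"
  obtains Q q where "Q \<in> Reps" "evs Q = {q}" "lab Q q = a"
proof -
  obtain e :: 'e where True by simp
  define T where "T = ({e}, {(e, e)}, \<lambda>x. if x = e then a else undefined)"
  have "finite_lposet T"
    unfolding T_def finite_lposet_def wf_lposet_def evs_def ord_def lab_def by auto
  then obtain Q where Q: "Q \<in> Reps" "lposet_iso T Q"
    using assms unfolding is_rep_choice_def by blast
  then obtain \<sigma> \<tau> where \<sigma>: "oemb T Q \<sigma>" and \<tau>: "oemb Q T \<tau>" and \<sigma>\<tau>: "meq Q (\<sigma> \<circ> \<tau>) id"
    unfolding lposet_iso_def by blast
  have evs_T: "evs T = {e}"
    by (simp add: T_def evs_def)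
  have "evs Q = {\<sigma> e}"
  proof
    show "evs Q \<subseteq> {\<sigma> e}"
    proof
      fix r assume r: "r \<in> evs Q"
      then have "\<tau> r = e"
        using oemb_evs[OF \<tau> r] evs_T by simp
      with \<sigma>\<tau> r show "r \<in> {\<sigma> e}"
        unfolding meq_def by force
    qed
  qed (use oemb_evs[OF \<sigma>] evs_T in simp)
  moreover have "lab Q (\<sigma> e) = a"
    using oemb_lab[OF \<sigma>] evs_T by (simp add: T_def lab_def)
  ultimately show thesis
    using that Q(1) by blast
qed

lemma oemb_singleton:
  assumes "wf_lposet T" "wf_lposet Q" "evs Q = {q}" "x \<in> evs T" "lab T x = lab Q q"
  shows "oemb Q T (\<lambda>_. x)"
  using assms lposet_refl[OF assms(1,4)] lposet_refl[OF assms(2), of q] unfolding oemb_def by auto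

lemma pullback_event_lift:
  assumes R: "is_rep_choice Reps" and PB: "is_pullback_O Reps P B C D p1 p2 h k"
    and x: "x \<in> evs B" and y: "y \<in> evs C" and hk: "h x = k y"
  obtains u where "u \<in> evs P" "p1 u = x" "p2 u = y"
proof -
  note pb = is_pullback_OD[OF PB]
  have wf: "wf_lposet B" "wf_lposet C"
    using rep_choice_finite_lposet[OF R] pb(2,3) unfolding finite_lposet_def by blast+
  obtain Q q where Q: "Q \<in> Reps" "evs Q = {q}" "lab Q q = lab B x"
    using rep_choice_singleton[OF R] .
  have wQ: "wf_lposet Q"
    using rep_choice_finite_lposet[OF R Q(1)] unfolding finite_lposet_def by blast
  have "lab C y = lab B x"
    using oemb_lab[OF pb(7) x] oemb_lab[OF pb(8) y] hk by simp
  then have "oemb Q B (\<lambda>_. x)" "oemb Q C (\<lambda>_. y)"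
    using oemb_singleton[OF _ wQ Q(2)] wf x y Q(3) by simp_all
  moreover have "meq Q (h \<circ> (\<lambda>_. x)) (k \<circ> (\<lambda>_. y))"
    using hk unfolding meq_def by simp
  ultimately obtain u where "oemb Q P u" "meq Q (p1 \<circ> u) (\<lambda>_. x)" "meq Q (p2 \<circ> u) (\<lambda>_. y)"
    using is_pullback_O_universal[OF PB Q(1)] by blast
  moreover have "q \<in> evs Q"
    using Q(2) by simp
  ultimately show thesis
    using that oemb_evs unfolding meq_def by (metis comp_apply)
qed

section \<open>Lifting compatible pairs of P-markings\<close>

text \<open>If the images of \<open>K\<close> and \<open>L\<close> generate the same down-set, then a maximal element of \<open>K\<close>
  is mapped below some image of \<open>L\<close>, which in turn lies below an image of \<open>K\<close>; by maximality
  and reflection of the order these images coincide.\<close>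

lemma down_lmap_eq_common_image:
  assumes B: "wf_lposet B" and D: "wf_lposet D" and h: "oemb B D h" and k: "oemb C D k"
    and K: "finite K" "K \<subseteq> levs B" and L: "L \<subseteq> levs C"
    and eq: "down D (lmap h ` K) = down D (lmap k ` L)" and x: "x \<in> K"
  obtains x' y' where "x' \<in> K" "y' \<in> L" "(fst x, fst x') \<in> ord B" "h (fst x') = k (fst y')"
proof -
  have evs_K: "fst ` K \<subseteq> evs B"
    using K(2) by (auto simp: mem_levs_iff)
  obtain m where m: "m \<in> fst ` K" "(fst x, m) \<in> ord B"
    and max: "\<forall>b\<in>fst ` K. (m, b) \<in> ord B \<longrightarrow> b = m"
    by (rule lposet_maximal_above[OF B finite_imageI[OF K(1)] evs_K imageI[OF x]])
  then obtain x' where x': "x' \<in> K" "fst x' = m"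
    by blast
  have "lmap h x' \<in> down D (lmap k ` L)"
    using lmap_mem_down_lmap[OF D h x'(1) K(2)] eq by simp
  then obtain y' where y': "y' \<in> L" and hk: "(h m, k (fst y')) \<in> ord D"
    using x'(2) by (auto simp: mem_down_iff)
  have "lmap k y' \<in> down D (lmap h ` K)"
    using lmap_mem_down_lmap[OF D k y' L] eq by simp
  then obtain x'' where x'': "x'' \<in> K" and kh: "(k (fst y'), h (fst x'')) \<in> ord D"
    by (auto simp: mem_down_iff)
  have "m \<in> evs B" "fst x'' \<in> evs B"
    using m(1) x'' evs_K by auto
  then have "(m, fst x'') \<in> ord B"
    using lposet_trans[OF D hk kh] oemb_ord_iff[OF h] by simp
  then have "fst x'' = m"
    using max x'' by blast
  then have "h m = k (fst y')"
    using lposet_antisym[OF D hk] kh by simp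
  with that x'(1) y' m(2) x'(2) show thesis
    by simp
qed

lemma pullback_cover:
  assumes R: "is_rep_choice Reps" and PB: "is_pullback_O Reps P B C D p1 p2 h k"
    and K: "finite K" "K \<subseteq> levs B" and L: "L \<subseteq> levs C"
    and eq: "down D (lmap h ` K) = down D (lmap k ` L)" and x: "x \<in> K"
  obtains z where "z \<in> levs P" "lmap p1 z \<in> K" "lmap p2 z \<in> L" "(fst x, p1 (fst z)) \<in> ord B"
proof -
  note pb = is_pullback_OD[OF PB]
  have wf: "wf_lposet B" "wf_lposet D"
    using rep_choice_finite_lposet[OF R] pb(2,4) unfolding finite_lposet_def by blast+
  obtain x' y' where x': "x' \<in> K" and y': "y' \<in> L"
    and below: "(fst x, fst x') \<in> ord B" and hk: "h (fst x') = k (fst y')"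
    by (rule down_lmap_eq_common_image[OF wf pb(7,8) K L eq x])
  have x'_levs: "x' \<in> levs B" and y'_levs: "y' \<in> levs C"
    using x' y' K(2) L by blast+
  then have "fst x' \<in> evs B" "fst y' \<in> evs C"
    by (simp_all add: mem_levs_iff)
  then obtain u where u: "u \<in> evs P" "p1 u = fst x'" "p2 u = fst y'"
    by (rule pullback_event_lift[OF R PB _ _ hk])
  have "lmap p1 (u, lab P u) = x'" "lmap p2 (u, lab P u) = y'"
    using lmap_eq_levs[OF pb(5) u(1) x'_levs u(2)] lmap_eq_levs[OF pb(6) u(1) y'_levs u(3)] .
  with that[of "(u, lab P u)"] u(1,2) x' y' below show thesis
    by (simp add: mem_levs_iff)
qed

definition pullback_marking ::
  "('e,'a) lposet \<Rightarrow> ('e \<Rightarrow> 'e) \<Rightarrow> ('e \<Rightarrow> 'e) \<Rightarrow> ('e,'a) lposet \<Rightarrow> ('e \<Rightarrow> 'e) \<Rightarrow> ('e \<Rightarrow> 'e) \<Rightarrow>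
   ('e,'a,'s) cmarking \<Rightarrow> ('e,'a,'s) cmarking \<Rightarrow> ('e,'a,'s) cmarking" where
  "pullback_marking P p1 p2 D h k b c =
     {({z \<in> levs P. lmap p1 z \<in> K \<and> lmap p2 z \<in> L}, s) | K L s.
        (K, s) \<in> b \<and> (L, s) \<in> c \<and> down D (lmap h ` K) = down D (lmap k ` L)}"

lemma pullback_marking_memE:
  assumes "(G, s) \<in> pullback_marking P p1 p2 D h k b c"
  obtains K L where "G = {z \<in> levs P. lmap p1 z \<in> K \<and> lmap p2 z \<in> L}" "(K, s) \<in> b" "(L, s) \<in> c"
    "down D (lmap h ` K) = down D (lmap k ` L)"
  using assms unfolding pullback_marking_def by blast

lemma pullback_marking_swap_subset:
  "pullback_marking P p2 p1 D k h c b \<subseteq> pullback_marking P p1 p2 D h k b c"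
proof
  fix Gs assume Gs: "Gs \<in> pullback_marking P p2 p1 D k h c b"
  obtain G s where Gs_eq: "Gs = (G, s)"
    by fastforce
  obtain L K where "G = {z \<in> levs P. lmap p2 z \<in> L \<and> lmap p1 z \<in> K}" "(L, s) \<in> c" "(K, s) \<in> b"
    "down D (lmap k ` L) = down D (lmap h ` K)"
    using Gs unfolding Gs_eq by (rule pullback_marking_memE)
  moreover have "{z \<in> levs P. lmap p2 z \<in> L \<and> lmap p1 z \<in> K} = {z \<in> levs P. lmap p1 z \<in> K \<and> lmap p2 z \<in> L}"
    by blast
  ultimately show "Gs \<in> pullback_marking P p1 p2 D h k b c"
    unfolding Gs_eq pullback_marking_def by auto
qed

lemma pullback_marking_swap:
  "pullback_marking P p2 p1 D k h c b = pullback_marking P p1 p2 D h k b c"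
  by (intro equalityI pullback_marking_swap_subset)

lemma pullback_marking_in_Mobj:
  assumes P: "finite_lposet P" and p: "oemb P B p1" "oemb P C p2"
    and b: "b \<in> Mobj B" and c: "c \<in> Mobj C"
  shows "pullback_marking P p1 p2 D h k b c \<in> Mobj P"
proof -
  let ?G = "\<lambda>K L. {z \<in> levs P. lmap p1 z \<in> K \<and> lmap p2 z \<in> L}"
  have "pullback_marking P p1 p2 D h k b c \<subseteq> (\<lambda>((K, s), (L, _)). (?G K L, s)) ` (b \<times> c)"
  proof
    fix Gs assume "Gs \<in> pullback_marking P p1 p2 D h k b c"
    moreover obtain G s where "Gs = (G, s)"
      by fastforce
    ultimately obtain K L where "Gs = (?G K L, s)" "(K, s) \<in> b" "(L, s) \<in> c"
      by (auto elim: pullback_marking_memE)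
    then show "Gs \<in> (\<lambda>((K, s), (L, _)). (?G K L, s)) ` (b \<times> c)"
      by (intro rev_image_eqI[of "((K, s), (L, s))"]) simp_all
  qed
  then have "finite (pullback_marking P p1 p2 D h k b c)"
    using Mobj_finite[OF b] Mobj_finite[OF c] finite_subset by blast
  moreover have "finite G \<and> G \<subseteq> levs P \<and> down_closed P G"
    if G_mem: "(G, s) \<in> pullback_marking P p1 p2 D h k b c" for G s
  proof -
    obtain K L where G: "G = ?G K L" and "(K, s) \<in> b" "(L, s) \<in> c"
      using G_mem by (rule pullback_marking_memE)
    then have "down_closed P ({z \<in> levs P. lmap p1 z \<in> K} \<inter> {z \<in> levs P. lmap p2 z \<in> L})"
      using down_closed_lmap_preimage[OF p(1) Mobj_memD(3)[OF b]]
        down_closed_lmap_preimage[OF p(2) Mobj_memD(3)[OF c]]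
      by (blast intro: down_closed_Int)
    moreover have "?G K L = {z \<in> levs P. lmap p1 z \<in> K} \<inter> {z \<in> levs P. lmap p2 z \<in> L}"
      by blast
    moreover have "finite (levs P)"
      using P unfolding finite_lposet_def levs_def by simp
    moreover have sub: "?G K L \<subseteq> levs P"
      by blast
    ultimately show ?thesis
      using finite_subset[OF sub] unfolding G by simp
  qed
  ultimately show ?thesis
    unfolding Mobj_def by auto
qed

lemma down_lmap_pullback_cause:
  assumes R: "is_rep_choice Reps" and PB: "is_pullback_O Reps P B C D p1 p2 h k"
    and K: "finite K" "K \<subseteq> levs B" "down_closed B K" and L: "L \<subseteq> levs C"
    and eq: "down D (lmap h ` K) = down D (lmap k ` L)"
  shows "down B (lmap p1 ` {z \<in> levs P. lmap p1 z \<in> K \<and> lmap p2 z \<in> L}) = K"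
    (is "down B (lmap p1 ` ?G) = K")
proof
  show "down B (lmap p1 ` ?G) \<subseteq> K"
    using K(3) by (rule down_subset_down_closed) blast
  show "K \<subseteq> down B (lmap p1 ` ?G)"
  proof
    fix x assume x: "x \<in> K"
    obtain z where "z \<in> levs P" "lmap p1 z \<in> K" "lmap p2 z \<in> L" "(fst x, p1 (fst z)) \<in> ord B"
      by (rule pullback_cover[OF R PB K(1,2) L eq x])
    moreover have "x \<in> levs B"
      using x K(2) by blast
    ultimately show "x \<in> down B (lmap p1 ` ?G)"
      unfolding mem_down_iff by (intro conjI bexI[of _ "lmap p1 z"]) simp_all
  qed
qed

lemma Mmor_pullback_marking:
  assumes R: "is_rep_choice Reps" and PB: "is_pullback_O Reps P B C D p1 p2 h k"
    and b: "b \<in> Mobj B" and c: "c \<in> Mobj C" and bc: "Mmor D h b = Mmor D k c"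
  shows "Mmor B p1 (pullback_marking P p1 p2 D h k b c) = b"
proof -
  let ?G = "\<lambda>K L. {z \<in> levs P. lmap p1 z \<in> K \<and> lmap p2 z \<in> L}"
  have down_G: "down B (lmap p1 ` ?G K L) = K"
    if K: "(K, s) \<in> b" and L: "(L, s) \<in> c" and "down D (lmap h ` K) = down D (lmap k ` L)"
    for K L s
    using down_lmap_pullback_cause[OF R PB Mobj_memD[OF b K] Mobj_memD(2)[OF c L]] that(3) .
  show ?thesis
  proof (intro equalityI subsetI)
    fix p assume "p \<in> Mmor B p1 (pullback_marking P p1 p2 D h k b c)"
    then obtain G s where p: "p = (down B (lmap p1 ` G), s)"
      and G_mem: "(G, s) \<in> pullback_marking P p1 p2 D h k b c"
      unfolding Mmor_eq_image by auto
    from G_mem obtain K L where "G = ?G K L" "(K, s) \<in> b" "(L, s) \<in> c"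
      "down D (lmap h ` K) = down D (lmap k ` L)"
      by (rule pullback_marking_memE)
    with down_G p show "p \<in> b"
      by simp
  next
    fix p assume "p \<in> b"
    moreover obtain K s where p: "p = (K, s)"
      by fastforce
    ultimately have K: "(K, s) \<in> b"
      by simp
    obtain L where L: "(L, s) \<in> c" and eq: "down D (lmap h ` K) = down D (lmap k ` L)"
      by (rule Mmor_eq_Mmor_match[OF bc K])
    then have "(?G K L, s) \<in> pullback_marking P p1 p2 D h k b c"
      using K unfolding pullback_marking_def by auto
    moreover have "p = map_prod (\<lambda>K. down B (lmap p1 ` K)) id (?G K L, s)"
      using down_G[OF K L eq] p by simp
    ultimately show "p \<in> Mmor B p1 (pullback_marking P p1 p2 D h k b c)"
      unfolding Mmor_eq_image by (rule rev_image_eqI)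
  qed
qed

lemma Mmor_pullback_surj:
  assumes R: "is_rep_choice Reps" and PB: "is_pullback_O Reps P B C D p1 p2 h k"
    and b: "b \<in> Mobj B" and c: "c \<in> Mobj C" and bc: "Mmor D h b = Mmor D k c"
  shows "\<exists>m\<in>Mobj P. Mmor B p1 m = b \<and> Mmor C p2 m = c"
proof (intro bexI conjI)
  note pb = is_pullback_OD[OF PB]
  show "pullback_marking P p1 p2 D h k b c \<in> Mobj P"
    using pullback_marking_in_Mobj rep_choice_finite_lposet[OF R pb(1)] pb(5,6) b c .
  show "Mmor B p1 (pullback_marking P p1 p2 D h k b c) = b"
    by (rule Mmor_pullback_marking[OF R PB b c bc])
  show "Mmor C p2 (pullback_marking P p1 p2 D h k b c) = c"
    using Mmor_pullback_marking[OF R is_pullback_O_swap[OF PB] c b bc[symmetric]]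
    by (simp add: pullback_marking_swap)
qed

theorem lemma4:
  fixes Reps :: "('e,'a) lposet set"
  assumes "infinite (UNIV :: 'e set)"
    and "is_rep_choice Reps"
    and "is_pullback_O Reps P B C D p1 p2 h k"
  shows "is_pullback_Set (Mobj P :: ('e,'a,'s) cmarking set) (Mobj B) (Mobj C) (Mobj D)
           (Mmor B p1) (Mmor C p2) (Mmor D h) (Mmor D k)"
proof -
  note pb = is_pullback_OD[OF assms(3)]
  have fin: "finite_lposet P" "finite_lposet B" "finite_lposet C" "finite_lposet D"
    using rep_choice_finite_lposet[OF assms(2)] pb(1-4) by blast+
  then have wf: "wf_lposet B" "wf_lposet C" "wf_lposet D"
    unfolding finite_lposet_def by simp_all
  have maps: "\<forall>m\<in>Mobj P. Mmor B p1 m \<in> Mobj B \<and> Mmor C p2 m \<in> Mobj C"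
    "\<forall>b\<in>Mobj B. Mmor D h b \<in> Mobj D" "\<forall>c\<in>Mobj C. Mmor D k c \<in> Mobj D"
    using Mmor_in_Mobj fin Mobj_finite by blast+
  have comm: "Mmor D h (Mmor B p1 m) = Mmor D k (Mmor C p2 m)"
    if "m \<in> Mobj P" for m :: "('e,'a,'s) cmarking"
    using Mmor_comp[OF wf(1,3) pb(5,7) that] Mmor_comp[OF wf(2,3) pb(6,8) that] Mmor_cong[OF pb(9) that]
    by simp
  have "inj_on (\<lambda>m. (Mmor B p1 m, Mmor C p2 m)) (Mobj P :: ('e,'a,'s) cmarking set)"
    using inj_on_Mmor[OF wf(1) pb(5)] by (auto simp: inj_on_def)
  moreover have "(\<lambda>m. (Mmor B p1 m, Mmor C p2 m)) ` (Mobj P :: ('e,'a,'s) cmarking set) =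
      {(b, c). b \<in> Mobj B \<and> c \<in> Mobj C \<and> Mmor D h b = Mmor D k c}"
    using maps(1) comm Mmor_pullback_surj[OF assms(2,3)] by fast
  ultimately show ?thesis
    unfolding is_pullback_Set_def bij_betw_def using maps comm by blast
qed

end
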